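(* Let $M\in\mathbb{R}^{n\times n}$, $q\in\mathbb{R}^n$, $r\ge 2$, and let $f_r$, $\mathrm{sol}(M,q)$, $\mathrm{fea}(M,q)$ and $\mathcal{G}_f$ be as in the context. Then: 1) If $M$ is positive semidefinite and $\mathrm{fea}(M,q)$ is nonempty, then $\mathrm{sol}(M,q)=\mathcal{G}_f$ and this set is nonempty. 2) If $M$ is a P-matrix, then $\mathrm{sol}(M,q)=\mathcal{G}_f=\{x^*\}$, where $x^*$ is the unique element of $\mathrm{sol}(M,q)$.
   Context: $f_r(x)=\frac1r\big[\langle x_+^r,(Mx+q)_+^r\rangle+\|x_-\|_r^r+\|(Mx+q)_-\|_r^r\big]$, where $a_+=\max\{a,0\}$, $a_-=\min\{a,0\}$ componentwise, $x_+^r$ is the componentwise $r$th power of $x_+$, and $\|z\|_r^r=\sum_i|z_i|^r$ (this function is continuously differentiable for $r\ge 2$). $\mathrm{sol}(M,q)=\{x\in\mathbb{R}^n: x\ge0,\ Mx+q\ge0,\ \langle x,Mx+q\rangle=0\}$; $\mathrm{fea}(M,q)=\{x\in\mathbb{R}^n: x\ge0,\ Mx+q\ge0\}$; $\mathcal{G}_f=\{x\in\mathbb{R}^n:\nabla f_r(x)=0\}$. A P-matrix is a square matrix all of whose principal minors are positive. *)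

theory Defs
  imports "HOL-Analysis.Analysis"
begin

definition pos_part :: "real^'n \<Rightarrow> real^'n" where
  "pos_part x = (\<chi> i. max (x $ i) 0)"

definition neg_part :: "real^'n \<Rightarrow> real^'n" where
  "neg_part x = (\<chi> i. min (x $ i) 0)"

definition f_r :: "real^'n^'n \<Rightarrow> real^'n \<Rightarrow> real \<Rightarrow> real^'n \<Rightarrow> real" where
  "f_r M q r x = (1 / r) *
     ((\<Sum>i\<in>UNIV. (pos_part x $ i) powr r * (pos_part (M *v x + q) $ i) powr r)
      + (\<Sum>i\<in>UNIV. \<bar>neg_part x $ i\<bar> powr r)
      + (\<Sum>i\<in>UNIV. \<bar>neg_part (M *v x + q) $ i\<bar> powr r))"

definition lcp_sol :: "real^'n^'n \<Rightarrow> real^'n \<Rightarrow> (real^'n) set" where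
  "lcp_sol M q = {x. (\<forall>i. 0 \<le> x $ i) \<and> (\<forall>i. 0 \<le> (M *v x + q) $ i) \<and> x \<bullet> (M *v x + q) = 0}"

definition lcp_fea :: "real^'n^'n \<Rightarrow> real^'n \<Rightarrow> (real^'n) set" where
  "lcp_fea M q = {x. (\<forall>i. 0 \<le> x $ i) \<and> (\<forall>i. 0 \<le> (M *v x + q) $ i)}"

definition stat_set :: "real^'n^'n \<Rightarrow> real^'n \<Rightarrow> real \<Rightarrow> (real^'n) set" where
  "stat_set M q r = {x. (f_r M q r has_derivative (\<lambda>h. 0)) (at x)}"

definition psd_matrix :: "real^'n^'n \<Rightarrow> bool" where
  "psd_matrix M \<longleftrightarrow> (\<forall>x. 0 \<le> x \<bullet> (M *v x))"

text \<open>Principal minor indexed by S, via the Leibniz formula (as det is defined in the library).\<close>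
definition principal_minor :: "real^'n^'n \<Rightarrow> 'n set \<Rightarrow> real" where
  "principal_minor M S = (\<Sum>p | p permutes S. of_int (sign p) * (\<Prod>i\<in>S. M $ i $ p i))"

definition P_matrix :: "real^'n^'n \<Rightarrow> bool" where
  "P_matrix M \<longleftrightarrow> (\<forall>S. S \<noteq> {} \<longrightarrow> 0 < principal_minor M S)"

end

theory Submission
  imports Defs
begin

text \<open>
  For r > 1 the merit function is C1 with gradient a + M^T b, where a_i and b_i are the two
  partial derivatives of the scalar summand at the pair (x_i, (Mx + q)_i). Both vanish exactly at
  complementary pairs, and a_i b_i \<ge> 0 always, so solutions are stationary. At a stationary
  point a = - M^T b. If M is positive semidefinite, pairing with b forces a_i b_i = 0, and then
  pairing with x - u for a feasible u forces x to be feasible and complementary. If M^T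
  reverses the sign of no nonzero vector, the same equation forces b = 0, hence a = 0.

  P-matrices and their transposes reverse the sign of no nonzero vector: a sign reversal of z
  yields a nonnegative diagonal shift making z a kernel vector of a principal submatrix. This
  property gives uniqueness and makes the merit function coercive, so a global minimiser exists,
  and it is a solution. For positive semidefinite M the regularised problems with M + eps I are
  solvable, and their solutions x satisfy eps x \<longlonglongrightarrow> 0. As x also solves the problem for M with
  data q + eps x, and the data for which the problem is solvable form a finite union of closed
  complementary cones, q lies in that union.
\<close>

section \<open>The merit function and its gradient\<close>

definition ppow :: "real \<Rightarrow> real \<Rightarrow> real" where
  "ppow r t = max t 0 powr r"

lemma ppow_nonneg [simp]: "0 \<le> ppow r t"
  by (simp add: ppow_def)

lemma ppow_pos_iff [simp]: "0 < ppow r t \<longleftrightarrow> 0 < t"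
  by (auto simp: ppow_def max_def)

lemma ppow_eq_0 [simp]: "t \<le> 0 \<Longrightarrow> ppow r t = 0"
  by (simp add: ppow_def)

lemma ppow_eq_0_iff: "ppow r t = 0 \<longleftrightarrow> t \<le> 0"
  by (auto simp: ppow_def max_def)

lemma ppow_ge:
  assumes "1 \<le> r"
  shows "t - 1 \<le> ppow r t"
proof (cases "1 \<le> t")
  case True
  then have "t powr 1 \<le> t powr r"
    using assms by (intro powr_mono) auto
  with True show ?thesis
    by (simp add: ppow_def)
next
  case False
  then show ?thesis
    using ppow_nonneg[of r t] by linarith
qed

lemma has_real_derivative_ppow_at_0:
  assumes "1 < r"
  shows "(ppow r has_real_derivative 0) (at 0)"
proof -
  have "((\<lambda>y. ppow r y / y) \<longlongrightarrow> 0) (at 0)"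
  proof (rule Lim_null_comparison)
    show "\<forall>\<^sub>F y in at 0. norm (ppow r y / y) \<le> \<bar>y\<bar> powr (r - 1)"
    proof (intro always_eventually allI)
      fix y :: real
      show "norm (ppow r y / y) \<le> \<bar>y\<bar> powr (r - 1)"
      proof (cases "0 < y")
        case True
        then show ?thesis
          by (simp add: ppow_def powr_diff)
      qed simp
    qed
    have "((\<lambda>y. \<bar>y\<bar> powr (r - 1)) \<longlongrightarrow> \<bar>0\<bar> powr (r - 1)) (at (0::real))"
      using assms by (intro tendsto_powr' tendsto_intros) auto
    then show "((\<lambda>y. \<bar>y\<bar> powr (r - 1)) \<longlongrightarrow> 0) (at (0::real))"
      by simp
  qed
  then show ?thesis
    by (simp add: has_field_derivative_iff ppow_def)
qed

lemma has_real_derivative_ppow: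
  assumes "1 < r"
  shows "(ppow r has_real_derivative r * ppow (r - 1) t) (at t)"
proof -
  consider "0 < t" | "t < 0" | "t = 0"
    by linarith
  then show ?thesis
  proof cases
    case 1
    have "((\<lambda>z. z powr r) has_real_derivative r * ppow (r - 1) t) (at t)"
      using has_real_derivative_powr[OF 1, of r] 1 by (simp add: ppow_def)
    then show ?thesis
      by (rule has_field_derivative_transform_within_open[where S = "{0<..}"])
        (use 1 in \<open>auto simp: ppow_def\<close>)
  next
    case 2
    have "((\<lambda>z. 0) has_real_derivative r * ppow (r - 1) t) (at t)"
      using 2 by (simp add: ppow_def)
    then show ?thesis
      by (rule has_field_derivative_transform_within_open[where S = "{..<0}"])
        (use 2 in \<open>auto simp: ppow_def\<close>)
  qed (use has_real_derivative_ppow_at_0[OF assms] in simp)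
qed

lemma has_derivative_ppow:
  assumes "1 < r" and "(g has_derivative g') (at x)"
  shows "((\<lambda>x. ppow r (g x)) has_derivative (\<lambda>h. r * ppow (r - 1) (g x) * g' h)) (at x)"
  using has_derivative_compose[OF assms(2)
      has_field_derivative_imp_has_derivative[OF has_real_derivative_ppow[OF assms(1)]]]
  by (simp add: mult.assoc)

definition comp_merit :: "real \<Rightarrow> real \<Rightarrow> real \<Rightarrow> real" where
  "comp_merit r s t = (ppow r s * ppow r t + ppow r (- s) + ppow r (- t)) / r"

definition comp_merit_d1 :: "real \<Rightarrow> real \<Rightarrow> real \<Rightarrow> real" where
  "comp_merit_d1 r s t = ppow (r - 1) s * ppow r t - ppow (r - 1) (- s)"

lemma f_r_eq_sum: "f_r M q r x = (\<Sum>i\<in>UNIV. comp_merit r (x $ i) ((M *v x + q) $ i))"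
proof -
  have "\<bar>min t 0\<bar> = max (- t) 0" for t :: real
    by (simp add: min_def max_def)
  then show ?thesis
    by (simp add: f_r_def comp_merit_def ppow_def pos_part_def neg_part_def
        sum.distrib flip: sum_divide_distrib)
qed

lemma has_derivative_comp_merit:
  fixes \<sigma> \<tau> :: "'a::real_normed_vector \<Rightarrow> real"
  assumes r: "1 < r"
    and \<sigma>: "(\<sigma> has_derivative \<sigma>') (at x)" and \<tau>: "(\<tau> has_derivative \<tau>') (at x)"
  shows "((\<lambda>x. comp_merit r (\<sigma> x) (\<tau> x)) has_derivative
           (\<lambda>h. comp_merit_d1 r (\<sigma> x) (\<tau> x) * \<sigma>' h + comp_merit_d1 r (\<tau> x) (\<sigma> x) * \<tau>' h))
         (at x)"
proof -
  note d = has_derivative_ppow[OF r]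
  have "((\<lambda>x. (ppow r (\<sigma> x) * ppow r (\<tau> x) + ppow r (- \<sigma> x) + ppow r (- \<tau> x)) * inverse r)
        has_derivative
        (\<lambda>h. (ppow r (\<sigma> x) * (r * ppow (r - 1) (\<tau> x) * \<tau>' h)
              + r * ppow (r - 1) (\<sigma> x) * \<sigma>' h * ppow r (\<tau> x)
              + r * ppow (r - 1) (- \<sigma> x) * - \<sigma>' h
              + r * ppow (r - 1) (- \<tau> x) * - \<tau>' h) * inverse r)) (at x)"
    by (intro has_derivative_mult_left has_derivative_add has_derivative_mult
        d \<sigma> \<tau> has_derivative_minus)
  then show ?thesis
    unfolding comp_merit_def divide_inverse
    by (rule has_derivative_eq_rhs) (use r in \<open>auto simp: comp_merit_d1_def field_simps\<close>)
qed

definition merit_grad_x :: "real^'n^'n \<Rightarrow> real^'n \<Rightarrow> real \<Rightarrow> real^'n \<Rightarrow> real^'n" where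
  "merit_grad_x M q r x = (\<chi> i. comp_merit_d1 r (x $ i) ((M *v x + q) $ i))"

definition merit_grad_y :: "real^'n^'n \<Rightarrow> real^'n \<Rightarrow> real \<Rightarrow> real^'n \<Rightarrow> real^'n" where
  "merit_grad_y M q r x = (\<chi> i. comp_merit_d1 r ((M *v x + q) $ i) (x $ i))"

definition f_r_grad :: "real^'n^'n \<Rightarrow> real^'n \<Rightarrow> real \<Rightarrow> real^'n \<Rightarrow> real^'n" where
  "f_r_grad M q r x = merit_grad_x M q r x + transpose M *v merit_grad_y M q r x"

lemma has_derivative_f_r:
  fixes M :: "real^'n^'n"
  assumes r: "1 < r"
  shows "(f_r M q r has_derivative (\<lambda>h. f_r_grad M q r x \<bullet> h)) (at x)"
proof -
  have coord: "((\<lambda>x. x $ i) has_derivative (\<lambda>h. h $ i)) (at x)"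
    and image: "((\<lambda>x. (M *v x + q) $ i) has_derivative (\<lambda>h. (M *v h) $ i)) (at x)"
    for i :: 'n and x :: "real^'n"
    by (auto intro!: derivative_eq_intros bounded_linear_imp_has_derivative
        bounded_linear_compose[OF bounded_linear_vec_nth matrix_vector_mul_bounded_linear])
  have "(f_r M q r has_derivative
          (\<lambda>h. \<Sum>i\<in>UNIV. comp_merit_d1 r (x $ i) ((M *v x + q) $ i) * h $ i
                        + comp_merit_d1 r ((M *v x + q) $ i) (x $ i) * (M *v h) $ i)) (at x)"
    unfolding f_r_eq_sum[abs_def]
    by (intro has_derivative_sum has_derivative_comp_merit[OF r coord image])
  moreover have "f_r_grad M q r x \<bullet> h
      = merit_grad_x M q r x \<bullet> h + merit_grad_y M q r x \<bullet> (M *v h)" for h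
    by (simp add: f_r_grad_def inner_add_left dot_lmul_matrix)
  ultimately show ?thesis
    by (simp add: merit_grad_x_def merit_grad_y_def inner_vec_def sum.distrib mult.commute)
qed

lemma stat_set_iff:
  assumes "1 < r"
  shows "x \<in> stat_set M q r \<longleftrightarrow> f_r_grad M q r x = 0"
proof
  assume "x \<in> stat_set M q r"
  then have "(f_r M q r has_derivative (\<lambda>h. 0)) (at x)"
    by (simp add: stat_set_def)
  then have "(\<lambda>h. f_r_grad M q r x \<bullet> h) = (\<lambda>h. 0)"
    by (rule has_derivative_unique[OF has_derivative_f_r[OF assms]])
  then show "f_r_grad M q r x = 0"
    by (metis inner_eq_zero_iff)
next
  assume "f_r_grad M q r x = 0"
  then show "x \<in> stat_set M q r"
    using has_derivative_f_r[OF assms, of M q x] by (simp add: stat_set_def)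
qed

section \<open>Stationary points\<close>

lemma comp_merit_d1_pos: "0 < s \<Longrightarrow> 0 < t \<Longrightarrow> 0 < comp_merit_d1 r s t"
  by (simp add: comp_merit_d1_def)

lemma comp_merit_d1_eq:
  "\<not> (0 < s \<and> 0 < t) \<Longrightarrow> comp_merit_d1 r s t = - ppow (r - 1) (- s)"
  by (auto simp: comp_merit_d1_def not_less)

lemma comp_merit_d1_mult_nonneg: "0 \<le> comp_merit_d1 r s t * comp_merit_d1 r t s"
proof (cases "0 < s \<and> 0 < t")
  case True
  then show ?thesis
    by (simp add: comp_merit_d1_pos less_imp_le)
next
  case False
  then show ?thesis
    by (simp add: comp_merit_d1_eq conj_commute)
qed

lemma comp_merit_d1_eq_0_iff:
  "comp_merit_d1 r s t = 0 \<and> comp_merit_d1 r t s = 0 \<longleftrightarrow> 0 \<le> s \<and> 0 \<le> t \<and> s * t = 0"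
proof (cases "0 < s \<and> 0 < t")
  case True
  then show ?thesis
    using comp_merit_d1_pos[of s t r] by simp
next
  case False
  then show ?thesis
    by (auto simp: comp_merit_d1_eq ppow_eq_0_iff conj_commute)
qed

lemma lcp_sol_iff_complementary:
  "x \<in> lcp_sol M q \<longleftrightarrow>
     (\<forall>i. 0 \<le> x $ i \<and> 0 \<le> (M *v x + q) $ i \<and> x $ i * (M *v x + q) $ i = 0)"
proof -
  have "x \<bullet> (M *v x + q) = 0 \<longleftrightarrow> (\<forall>i. x $ i * (M *v x + q) $ i = 0)"
    if "\<forall>i. 0 \<le> x $ i" "\<forall>i. 0 \<le> (M *v x + q) $ i"
    unfolding inner_vec_def using that by (subst sum_nonneg_eq_0_iff) auto
  then show ?thesis
    unfolding lcp_sol_def by auto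
qed

lemma lcp_sol_iff_merit_grads_eq_0:
  "x \<in> lcp_sol M q \<longleftrightarrow> merit_grad_x M q r x = 0 \<and> merit_grad_y M q r x = 0"
proof -
  have "x \<in> lcp_sol M q \<longleftrightarrow> (\<forall>i. comp_merit_d1 r (x $ i) ((M *v x + q) $ i) = 0
                                 \<and> comp_merit_d1 r ((M *v x + q) $ i) (x $ i) = 0)"
    by (simp only: lcp_sol_iff_complementary comp_merit_d1_eq_0_iff)
  then show ?thesis
    by (simp add: merit_grad_x_def merit_grad_y_def vec_eq_iff all_conj_distrib)
qed

lemma lcp_sol_subset_stat_set:
  assumes "1 < r"
  shows "lcp_sol M q \<subseteq> stat_set M q r"
  using lcp_sol_iff_merit_grads_eq_0[of _ M q r] by (auto simp: stat_set_iff[OF assms] f_r_grad_def)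

lemma ppow_neg_mult_nonneg: "0 \<le> w \<Longrightarrow> 0 \<le> ppow p (- s) * (w - s)"
  by (cases "s < 0") auto

lemma ppow_neg_mult_pos: "0 \<le> w \<Longrightarrow> s < 0 \<Longrightarrow> 0 < ppow p (- s) * (w - s)"
  by simp

lemma merit_grads_mult_nonneg: "0 \<le> merit_grad_x M q r x $ i * merit_grad_y M q r x $ i"
  by (simp add: merit_grad_x_def merit_grad_y_def comp_merit_d1_mult_nonneg)

lemma psd_stat_set_not_both_pos:
  assumes r: "1 < r" and psd: "psd_matrix M" and x: "x \<in> stat_set M q r"
  shows "\<not> (0 < x $ i \<and> 0 < (M *v x + q) $ i)"
proof -
  define a b where "a = merit_grad_x M q r x" and "b = merit_grad_y M q r x"
  have "a \<bullet> b = - ((transpose M *v b) \<bullet> b)"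
    using x by (simp add: stat_set_iff[OF r] f_r_grad_def a_def b_def eq_neg_iff_add_eq_0[symmetric]
        del: transpose_matrix_vector)
  also have "\<dots> = - (b \<bullet> (M *v b))"
    by (simp add: dot_lmul_matrix)
  also have "\<dots> \<le> 0"
    using psd by (simp add: psd_matrix_def)
  finally have "(\<Sum>j\<in>UNIV. a $ j * b $ j) = 0"
    using merit_grads_mult_nonneg[of M q r x] by (intro antisym sum_nonneg) (auto simp: inner_vec_def a_def b_def)
  then have "a $ i * b $ i = 0"
    using merit_grads_mult_nonneg[of M q r x] by (simp add: sum_nonneg_eq_0_iff a_def b_def)
  then show ?thesis
    using comp_merit_d1_pos[of "x $ i" "(M *v x + q) $ i" r] comp_merit_d1_pos[of "(M *v x + q) $ i" "x $ i" r]
    unfolding a_def b_def merit_grad_x_def merit_grad_y_def by auto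
qed

lemma psd_stat_set_subset_lcp_sol:
  assumes r: "1 < r" and psd: "psd_matrix M" and u: "u \<in> lcp_fea M q"
  shows "stat_set M q r \<subseteq> lcp_sol M q"
proof
  fix x
  assume x: "x \<in> stat_set M q r"
  define y v where "y = M *v x + q" and "v = M *v u + q"
  define a b where "a = merit_grad_x M q r x" and "b = merit_grad_y M q r x"
  have not_both_pos: "\<not> (0 < x $ i \<and> 0 < y $ i)" for i
    using psd_stat_set_not_both_pos[OF r psd x] by (simp add: y_def)
  then have a_eq: "a $ i = - ppow (r - 1) (- x $ i)" and b_eq: "b $ i = - ppow (r - 1) (- y $ i)" for i
    by (auto simp: a_def b_def merit_grad_x_def merit_grad_y_def y_def comp_merit_d1_eq conj_commute)
  have u_nonneg: "0 \<le> u $ i" and v_nonneg: "0 \<le> v $ i" for i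
    using u by (auto simp: lcp_fea_def v_def)
  \<comment> \<open>Test the vanishing gradient with the direction from the feasible point u to x.\<close>
  have "y - v = M *v (x - u)"
    by (simp add: y_def v_def matrix_vector_mult_diff_distrib)
  then have "a \<bullet> (x - u) + b \<bullet> (y - v) = f_r_grad M q r x \<bullet> (x - u)"
    by (simp add: f_r_grad_def a_def b_def inner_add_left dot_lmul_matrix)
  also have "\<dots> = 0"
    using x by (simp add: stat_set_iff[OF r])
  finally have "(\<Sum>i\<in>UNIV. a $ i * (x $ i - u $ i) + b $ i * (y $ i - v $ i)) = 0"
    by (simp add: inner_vec_def sum.distrib)
  moreover have "a $ i * (x $ i - u $ i) + b $ i * (y $ i - v $ i)
      = ppow (r - 1) (- x $ i) * (u $ i - x $ i) + ppow (r - 1) (- y $ i) * (v $ i - y $ i)" for i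
    by (simp add: a_eq b_eq algebra_simps)
  ultimately have "(\<Sum>i\<in>UNIV. ppow (r - 1) (- x $ i) * (u $ i - x $ i)
                              + ppow (r - 1) (- y $ i) * (v $ i - y $ i)) = 0"
    by simp
  then have gaps_zero: "ppow (r - 1) (- x $ i) * (u $ i - x $ i) = 0 \<and>
                        ppow (r - 1) (- y $ i) * (v $ i - y $ i) = 0" for i
    using ppow_neg_mult_nonneg[OF u_nonneg] ppow_neg_mult_nonneg[OF v_nonneg]
    by (subst (asm) sum_nonneg_eq_0_iff) (auto simp: add_nonneg_eq_0_iff)
  have x_nonneg: "0 \<le> x $ i" and y_nonneg: "0 \<le> y $ i" for i
    using gaps_zero[of i] ppow_neg_mult_pos[OF u_nonneg[of i], of "x $ i" "r - 1"]
      ppow_neg_mult_pos[OF v_nonneg[of i], of "y $ i" "r - 1"] by linarith+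
  have "x $ i * y $ i = 0" for i
    using not_both_pos[of i] x_nonneg[of i] y_nonneg[of i] by (auto simp: less_le)
  with x_nonneg y_nonneg show "x \<in> lcp_sol M q"
    by (simp add: lcp_sol_iff_complementary y_def)
qed

section \<open>Matrices reversing the sign of no vector\<close>

text \<open>By the Fiedler--Ptak theorem these are exactly the P-matrices; only one direction is needed.\<close>

definition sign_nonreversing :: "real^'n^'n \<Rightarrow> bool" where
  "sign_nonreversing M \<longleftrightarrow> (\<forall>z. z \<noteq> 0 \<longrightarrow> (\<exists>i. 0 < z $ i * (M *v z) $ i))"

lemma sign_nonreversing_transpose_stat_set_subset_lcp_sol:
  assumes r: "1 < r" and snr: "sign_nonreversing (transpose M)"
  shows "stat_set M q r \<subseteq> lcp_sol M q"
proof
  fix x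
  assume "x \<in> stat_set M q r"
  define a b where "a = merit_grad_x M q r x" and "b = merit_grad_y M q r x"
  have grad: "transpose M *v b = - a"
    using \<open>x \<in> stat_set M q r\<close>
    by (simp add: stat_set_iff[OF r] f_r_grad_def a_def b_def eq_neg_iff_add_eq_0 add.commute
        del: transpose_matrix_vector)
  have "b = 0"
  proof (rule ccontr)
    assume "b \<noteq> 0"
    then obtain j where "0 < b $ j * (transpose M *v b) $ j"
      using snr unfolding sign_nonreversing_def by blast
    moreover have "0 \<le> a $ j * b $ j"
      unfolding a_def b_def by (rule merit_grads_mult_nonneg)
    ultimately show False
      by (simp add: grad mult.commute del: transpose_matrix_vector)
  qed
  moreover from this have "a = 0"
    using grad by simp
  ultimately show "x \<in> lcp_sol M q"
    by (simp add: lcp_sol_iff_merit_grads_eq_0[of x M q r] a_def b_def)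
qed

lemma sign_nonreversing_lcp_sol_unique:
  assumes snr: "sign_nonreversing M" and x: "x \<in> lcp_sol M q" and x': "x' \<in> lcp_sol M q"
  shows "x = x'"
proof (rule ccontr)
  assume "x \<noteq> x'"
  then obtain i where i: "0 < (x - x') $ i * (M *v (x - x')) $ i"
    using snr unfolding sign_nonreversing_def by (metis right_minus_eq)
  define y y' where "y = M *v x + q" and "y' = M *v x' + q"
  have c: "0 \<le> x $ i" "0 \<le> y $ i" "x $ i * y $ i = 0" "0 \<le> x' $ i" "0 \<le> y' $ i" "x' $ i * y' $ i = 0"
    using x x' by (simp_all add: lcp_sol_iff_complementary y_def y'_def)
  have "(x - x') $ i * (M *v (x - x')) $ i = (x $ i - x' $ i) * (y $ i - y' $ i)"
    by (simp add: y_def y'_def matrix_vector_mult_diff_distrib)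
  also have "\<dots> = x $ i * y $ i + x' $ i * y' $ i - (x $ i * y' $ i + x' $ i * y $ i)"
    by (simp add: algebra_simps)
  also have "\<dots> = - (x $ i * y' $ i + x' $ i * y $ i)"
    by (simp add: c)
  also have "\<dots> \<le> 0"
    using mult_nonneg_nonneg[OF c(1) c(5)] mult_nonneg_nonneg[OF c(4) c(2)] by linarith
  finally show False
    using i by simp
qed

lemma sign_nonreversing_uniform_on_sphere:
  fixes M :: "real^'n^'n"
  assumes snr: "sign_nonreversing M"
  obtains \<mu> where "0 < \<mu>" and "\<And>w. norm w = 1 \<Longrightarrow> \<exists>i. \<mu> \<le> w $ i * (M *v w) $ i"
proof -
  define h where "h z = (\<Sum>i\<in>UNIV. max (z $ i * (M *v z) $ i) 0)" for z :: "real^'n"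
  have "continuous_on (sphere 0 1) h"
    unfolding h_def by (intro continuous_intros matrix_vector_mult_linear_continuous_on)
  moreover have "sphere (0::real^'n) 1 \<noteq> {}"
    by (simp add: sphere_def) (metis norm_axis_1)
  ultimately obtain z where z: "z \<in> sphere 0 1" and z_min: "\<And>w. w \<in> sphere 0 1 \<Longrightarrow> h z \<le> h w"
    using continuous_attains_inf[OF compact_sphere] by blast
  have "z \<noteq> 0"
    using z by auto
  then obtain k where "0 < z $ k * (M *v z) $ k"
    using snr unfolding sign_nonreversing_def by blast
  then have "0 < max (z $ k * (M *v z) $ k) 0"
    by simp
  also have "\<dots> \<le> h z"
    unfolding h_def by (rule member_le_sum) auto
  finally have hz: "0 < h z" .
  define \<mu> where "\<mu> = h z / real CARD('n)"
  have \<mu>: "0 < \<mu>"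
    using hz by (simp add: \<mu>_def)
  show thesis
  proof (rule that[OF \<mu>])
    fix w :: "real^'n"
    assume "norm w = 1"
    \<comment> \<open>Otherwise every summand of h w would be below the mean mu of the summands of h z.\<close>
    obtain i where "\<mu> \<le> max (w $ i * (M *v w) $ i) 0"
    proof (rule ccontr)
      assume "\<not> thesis"
      then have "max (w $ i * (M *v w) $ i) 0 < \<mu>" for i
        using that not_le by blast
      then have "h w < (\<Sum>i\<in>(UNIV::'n set). \<mu>)"
        unfolding h_def by (intro sum_strict_mono) auto
      also have "\<dots> = h z"
        by (simp add: \<mu>_def)
      finally show False
        using z_min[of w] \<open>norm w = 1\<close> by simp
    qed
    then show "\<exists>i. \<mu> \<le> w $ i * (M *v w) $ i"
      using \<mu> by (metis max_def order_less_irrefl order_less_le_trans)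
  qed
qed

lemma sign_nonreversing_uniform:
  fixes M :: "real^'n^'n"
  assumes snr: "sign_nonreversing M"
  obtains \<mu> where "0 < \<mu>" and "\<And>x. \<exists>i. \<mu> * (norm x)\<^sup>2 \<le> x $ i * (M *v x) $ i"
proof -
  obtain \<mu> where \<mu>: "0 < \<mu>" and sphere: "\<And>w. norm w = 1 \<Longrightarrow> \<exists>i. \<mu> \<le> w $ i * (M *v w) $ i"
    using sign_nonreversing_uniform_on_sphere[OF snr] by blast
  have "\<exists>i. \<mu> * (norm x)\<^sup>2 \<le> x $ i * (M *v x) $ i" for x :: "real^'n"
  proof (cases "x = 0")
    case False
    define w where "w = x /\<^sub>R norm x"
    obtain i where "\<mu> \<le> w $ i * (M *v w) $ i"
      using sphere[of w] False by (auto simp: w_def)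
    then have "\<mu> * (norm x)\<^sup>2 \<le> (w $ i * (M *v w) $ i) * (norm x)\<^sup>2"
      by (simp add: mult_right_mono)
    also have "\<dots> = x $ i * (M *v x) $ i"
      using False by (simp add: w_def matrix_vector_mult_scaleR field_simps power2_eq_square)
    finally show ?thesis ..
  qed simp
  with \<mu> show thesis
    by (rule that)
qed

lemma comp_merit_parts_le:
  assumes "0 < r"
  shows "ppow r s * ppow r t \<le> r * comp_merit r s t" and "ppow r (- s) \<le> r * comp_merit r s t"
  using assms by (simp_all add: comp_merit_def)

lemma comp_merit_le_f_r: "0 < r \<Longrightarrow> comp_merit r (x $ i) ((M *v x + q) $ i) \<le> f_r M q r x"
  unfolding f_r_eq_sum by (rule member_le_sum) (auto simp: comp_merit_def)

lemma f_r_sublevel_same_sign_bound: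
  assumes r: "1 \<le> r" and C: "f_r M q r x \<le> C" and same_sign: "0 < x $ i * (M *v x) $ i"
  shows "\<bar>x $ i\<bar> \<le> r * C + 1 \<or> \<bar>(M *v x) $ i\<bar> \<le> norm q + 2"
proof -
  define s t where "s = x $ i" and "t = (M *v x + q) $ i"
  have "comp_merit r s t \<le> C"
    using comp_merit_le_f_r[of r x i M q] r C by (simp add: s_def t_def)
  then have rC: "r * comp_merit r s t \<le> r * C"
    using r by (intro mult_left_mono) auto
  have "- s \<le> r * C + 1"
    using comp_merit_parts_le(2)[of r s t] ppow_ge[OF r, of "- s"] rC r by linarith
  moreover have "s \<le> r * C + 1" if "2 \<le> t"
  proof -
    have "1 \<le> ppow r t"
      using ppow_ge[OF r, of t] that by linarith
    then have "ppow r s \<le> ppow r s * ppow r t"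
      using mult_left_mono[of 1 "ppow r t" "ppow r s"] by simp
    then show ?thesis
      using comp_merit_parts_le(1)[of r s t] ppow_ge[OF r, of s] rC r by linarith
  qed
  moreover have "(M *v x) $ i - \<bar>q $ i\<bar> \<le> t"
    by (simp add: t_def)
  moreover have "\<bar>q $ i\<bar> \<le> norm q"
    by (rule component_le_norm_cart)
  ultimately show ?thesis
    using same_sign by (auto simp: s_def zero_less_mult_iff abs_if)
qed

lemma sign_nonreversing_bounded_f_r_sublevel:
  fixes M :: "real^'n^'n"
  assumes r: "1 \<le> r" and snr: "sign_nonreversing M"
  shows "bounded {x. f_r M q r x \<le> C}"
proof -
  obtain \<mu> where \<mu>: "0 < \<mu>" and \<mu>_bound: "\<And>x. \<exists>i. \<mu> * (norm x)\<^sup>2 \<le> x $ i * (M *v x) $ i"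
    using sign_nonreversing_uniform[OF snr] by blast
  obtain K where K: "0 < K" and K_bound: "\<And>x. norm (M *v x) \<le> norm x * K"
    using bounded_linear.pos_bounded[OF matrix_vector_mul_bounded_linear[of M]] by blast
  define R where "R = max ((r * C + 1) * K) (norm q + 2)"
  have R: "0 < R"
    by (simp add: R_def max.strict_coboundedI2 add_nonneg_pos)
  have bound: "\<mu> * norm x \<le> R" if "f_r M q r x \<le> C" for x
  proof (cases "x = 0")
    case False
    define N where "N = norm x"
    obtain i where i: "\<mu> * N\<^sup>2 \<le> x $ i * (M *v x) $ i"
      using \<mu>_bound N_def by blast
    define t s where "t = x $ i" and "s = (M *v x) $ i"
    have N: "0 < N" and t_le: "\<bar>t\<bar> \<le> N" and s_le: "\<bar>s\<bar> \<le> K * N"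
      using False component_le_norm_cart[of x i] component_le_norm_cart[of "M *v x" i] K_bound[of x]
      by (simp_all add: t_def s_def N_def mult.commute)
    then have "0 < \<mu> * N\<^sup>2"
      using \<mu> by simp
    then have "0 < t * s"
      using i by (simp add: t_def s_def)
    then have "\<bar>t\<bar> \<le> r * C + 1 \<or> \<bar>s\<bar> \<le> norm q + 2"
      unfolding t_def s_def by (rule f_r_sublevel_same_sign_bound[OF r that])
    then have "\<bar>t\<bar> * \<bar>s\<bar> \<le> R * N"
    proof
      assume "\<bar>t\<bar> \<le> r * C + 1"
      then have "\<bar>t\<bar> * \<bar>s\<bar> \<le> (r * C + 1) * (K * N)"
        using s_le by (intro mult_mono) auto
      also have "\<dots> \<le> R * N"
        using N by (simp add: R_def mult_right_mono flip: mult.assoc)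
      finally show ?thesis .
    next
      assume "\<bar>s\<bar> \<le> norm q + 2"
      then have "\<bar>t\<bar> * \<bar>s\<bar> \<le> N * (norm q + 2)"
        using t_le by (intro mult_mono) auto
      also have "\<dots> \<le> N * R"
        using N by (simp add: R_def mult_left_mono)
      finally show ?thesis
        by (simp add: mult.commute)
    qed
    then have "(\<mu> * N) * N \<le> R * N"
      using i by (simp add: t_def s_def power2_eq_square abs_mult[symmetric] mult.assoc)
    then show ?thesis
      using N by (simp add: N_def mult_right_le_imp_le)
  qed (use R in simp)
  have "norm x \<le> R / \<mu>" if "f_r M q r x \<le> C" for x
    using bound[OF that] \<mu> by (simp add: pos_le_divide_eq mult.commute)
  then show ?thesis
    unfolding bounded_iff by blast
qed

lemma continuous_on_f_r: "1 < r \<Longrightarrow> continuous_on S (f_r M q r)"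
  by (intro continuous_at_imp_continuous_on ballI has_derivative_continuous[OF has_derivative_f_r])

lemma sign_nonreversing_f_r_attains_min:
  fixes M :: "real^'n^'n"
  assumes r: "1 < r" and snr: "sign_nonreversing M"
  obtains z where "\<And>x. f_r M q r z \<le> f_r M q r x"
proof -
  define S where "S = {x. f_r M q r x \<le> f_r M q r 0}"
  have "bounded S"
    unfolding S_def using r by (intro sign_nonreversing_bounded_f_r_sublevel snr) simp
  moreover have "closed S"
    unfolding S_def by (rule closed_Collect_le[OF continuous_on_f_r[OF r] continuous_on_const])
  ultimately have "compact S"
    by (simp add: compact_eq_bounded_closed)
  moreover have "0 \<in> S"
    by (simp add: S_def)
  ultimately obtain z where z: "\<And>x. x \<in> S \<Longrightarrow> f_r M q r z \<le> f_r M q r x"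
    using continuous_attains_inf[of S "f_r M q r"] continuous_on_f_r[OF r] by blast
  have "f_r M q r z \<le> f_r M q r x" for x
  proof (cases "x \<in> S")
    case False
    then show ?thesis
      using z[OF \<open>0 \<in> S\<close>] by (simp add: S_def)
  qed (rule z)
  then show thesis
    by (rule that)
qed

lemma sign_nonreversing_lcp_solvable:
  fixes M :: "real^'n^'n"
  assumes "sign_nonreversing M" and "sign_nonreversing (transpose M)"
  shows "lcp_sol M q \<noteq> {}"
proof -
  have r: "(1::real) < 2"
    by simp
  obtain z where z: "\<And>x. f_r M q 2 z \<le> f_r M q 2 x"
    using sign_nonreversing_f_r_attains_min[OF r assms(1)] by blast
  \<comment> \<open>The exponent 2 is arbitrary: any global minimiser of a merit function is stationary.\<close>
  have "(\<lambda>h. f_r_grad M q 2 z \<bullet> h) = (\<lambda>h. 0)"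
    using differential_zero_maxmin[OF UNIV_I open_UNIV has_derivative_f_r[OF r]] z by blast
  then have "(f_r M q 2 has_derivative (\<lambda>h. 0)) (at z)"
    using has_derivative_f_r[OF r, of M q z] by simp
  then have "z \<in> stat_set M q 2"
    by (simp add: stat_set_def)
  then have "z \<in> lcp_sol M q"
    using sign_nonreversing_transpose_stat_set_subset_lcp_sol[OF r assms(2)] by blast
  then show ?thesis
    by blast
qed

section \<open>P-matrices\<close>

definition diag_mat :: "('n \<Rightarrow> real) \<Rightarrow> real^'n^'n" where
  "diag_mat d = (\<chi> i j. if i = j then d i else 0)"

lemma diag_mat_mult_vec [simp]: "(diag_mat d *v w) $ i = d i * w $ i"
proof -
  have "(diag_mat d *v w) $ i = (\<Sum>j\<in>UNIV. (if i = j then d i else 0) * w $ j)"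
    by (simp add: matrix_vector_mult_def diag_mat_def)
  also have "\<dots> = (\<Sum>j\<in>UNIV. if j = i then d i * w $ i else 0)"
    by (rule sum.cong) auto
  finally show ?thesis
    by simp
qed

definition principal_pad :: "real^'n^'n \<Rightarrow> 'n set \<Rightarrow> real^'n^'n" where
  "principal_pad A S = (\<chi> i j. if i \<in> S \<and> j \<in> S then A $ i $ j else if i = j then 1 else 0)"

lemma det_principal_pad:
  fixes A :: "real^'n^'n"
  shows "det (principal_pad A S) = principal_minor A S"
proof -
  let ?P = "principal_pad A S"
  have vanish: "(\<Prod>i\<in>UNIV. ?P $ i $ p i) = 0" if "p permutes UNIV" "\<not> p permutes S" for p
  proof -
    have "\<exists>i. i \<notin> S \<and> p i \<noteq> i"
    proof (rule ccontr)
      assume "\<not> ?thesis"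
      then have "p permutes S"
        using that(1) unfolding permutes_def by blast
      with that(2) show False ..
    qed
    then obtain i where "i \<notin> S" "p i \<noteq> i"
      by blast
    then have "?P $ i $ p i = 0"
      by (simp add: principal_pad_def)
    then show ?thesis
      by (intro prod_zero) auto
  qed
  have restrict: "(\<Prod>i\<in>UNIV. ?P $ i $ p i) = (\<Prod>i\<in>S. A $ i $ p i)" if p: "p permutes S" for p
  proof -
    have "(\<Prod>i\<in>UNIV. ?P $ i $ p i) = (\<Prod>i\<in>S. ?P $ i $ p i)"
      by (rule prod.mono_neutral_right) (auto simp: principal_pad_def permutes_not_in[OF p])
    also have "\<dots> = (\<Prod>i\<in>S. A $ i $ p i)"
      by (rule prod.cong) (auto simp: principal_pad_def permutes_in_image[OF p])
    finally show ?thesis .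
  qed
  have "det ?P = (\<Sum>p | p permutes UNIV. of_int (sign p) * (\<Prod>i\<in>UNIV. ?P $ i $ p i))"
    by (simp add: det_def)
  also have "\<dots> = (\<Sum>p | p permutes S. of_int (sign p) * (\<Prod>i\<in>UNIV. ?P $ i $ p i))"
  proof (rule sum.mono_neutral_right)
    show "finite {p. p permutes (UNIV::'n set)}"
      by (rule finite_permutations) simp
    show "{p. p permutes S} \<subseteq> {p. p permutes (UNIV::'n set)}"
      using permutes_subset by blast
  qed (simp add: vanish)
  also have "\<dots> = principal_minor A S"
    unfolding principal_minor_def by (rule sum.cong) (auto simp: restrict)
  finally show ?thesis .
qed

lemma principal_minor_transpose: "principal_minor (transpose A) S = principal_minor A S"
proof -
  have "principal_pad (transpose A) S = transpose (principal_pad A S)"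
    by (simp add: vec_eq_iff principal_pad_def transpose_def)
  then show ?thesis
    by (metis det_principal_pad det_transpose)
qed

lemma P_matrix_transpose: "P_matrix (transpose M) \<longleftrightarrow> P_matrix M"
  by (simp add: P_matrix_def principal_minor_transpose)

lemma principal_minor_empty: "principal_minor A {} = 1"
  by (simp add: principal_minor_def permutes_empty)

lemma principal_minor_add_diag_entry:
  "principal_minor (A + diag_mat (\<lambda>i. if i = k then c else 0)) S
     = principal_minor A S + (if k \<in> S then c * principal_minor A (S - {k}) else 0)"
proof (cases "k \<in> S")
  case False
  have "(\<Prod>i\<in>S. (A + diag_mat (\<lambda>i. if i = k then c else 0)) $ i $ p i) = (\<Prod>i\<in>S. A $ i $ p i)" for p
    by (rule prod.cong) (use False in \<open>auto simp: diag_mat_def\<close>)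
  with False show ?thesis
    by (simp add: principal_minor_def)
next
  case True
  let ?A' = "A + diag_mat (\<lambda>i. if i = k then c else 0)"
  have summand: "of_int (sign p) * (\<Prod>i\<in>S. ?A' $ i $ p i)
       = of_int (sign p) * (\<Prod>i\<in>S. A $ i $ p i)
         + (if p k = k then c * (of_int (sign p) * (\<Prod>i\<in>S - {k}. A $ i $ p i)) else 0)" for p
  proof -
    have "(\<Prod>i\<in>S - {k}. ?A' $ i $ p i) = (\<Prod>i\<in>S - {k}. A $ i $ p i)"
      by (rule prod.cong) (auto simp: diag_mat_def)
    then show ?thesis
      using prod.remove[OF finite True, of "\<lambda>i. ?A' $ i $ p i"]
        prod.remove[OF finite True, of "\<lambda>i. A $ i $ p i"]
      by (simp add: diag_mat_def algebra_simps)
  qed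
  \<comment> \<open>Only permutations fixing k meet the shifted entry; they are the permutations of S - {k}.\<close>
  have "{p. p permutes S \<and> p k = k} = {p. p permutes (S - {k})}"
    using True by (auto simp: permutes_def)
  then have fixing_k:
    "(\<Sum>p | p permutes S. if p k = k then c * (of_int (sign p) * (\<Prod>i\<in>S - {k}. A $ i $ p i)) else 0)
       = c * principal_minor A (S - {k})"
    by (simp add: sum.inter_filter[symmetric] finite_permutations principal_minor_def sum_distrib_left
        Collect_conj_eq[symmetric])
  have "principal_minor ?A' S = (\<Sum>p | p permutes S. of_int (sign p) * (\<Prod>i\<in>S. A $ i $ p i)
      + (if p k = k then c * (of_int (sign p) * (\<Prod>i\<in>S - {k}. A $ i $ p i)) else 0))"
    unfolding principal_minor_def by (rule sum.cong[OF refl summand])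
  also have "\<dots> = principal_minor A S + c * principal_minor A (S - {k})"
    by (simp only: sum.distrib fixing_k principal_minor_def)
  finally show ?thesis
    using True by simp
qed

lemma P_matrix_principal_minor_nonneg: "P_matrix M \<Longrightarrow> 0 \<le> principal_minor M S"
  by (cases "S = {}") (auto simp: P_matrix_def principal_minor_empty less_imp_le)

lemma principal_minor_add_diag_mono:
  assumes A: "\<And>T. 0 \<le> principal_minor A T" and d: "\<And>i. 0 \<le> d i"
  shows "principal_minor A S \<le> principal_minor (A + diag_mat d) S"
proof -
  have "\<forall>S. principal_minor A S \<le> principal_minor (A + diag_mat (\<lambda>i. if i \<in> K then d i else 0)) S"
    if "finite K" for K
    using that
  proof (induction K rule: finite_induct)
    case empty
    have "diag_mat (\<lambda>i. if i \<in> {} then d i else 0) = 0"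
      by (simp add: diag_mat_def vec_eq_iff)
    then show ?case
      by simp
  next
    case (insert k K)
    let ?A = "A + diag_mat (\<lambda>i. if i \<in> K then d i else 0)"
    have split: "A + diag_mat (\<lambda>i. if i \<in> insert k K then d i else 0)
        = ?A + diag_mat (\<lambda>i. if i = k then d k else 0)"
      using insert.hyps(2) by (auto simp: diag_mat_def vec_eq_iff)
    show ?case
    proof
      fix S
      have "0 \<le> principal_minor ?A (S - {k})"
        using insert.IH A[of "S - {k}"] by (meson order_trans)
      then have "0 \<le> (if k \<in> S then d k * principal_minor ?A (S - {k}) else 0)"
        using d[of k] by simp
      then show "principal_minor A S
          \<le> principal_minor (A + diag_mat (\<lambda>i. if i \<in> insert k K then d i else 0)) S"
        unfolding split principal_minor_add_diag_entry using insert.IH by (meson add_increasing2)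
    qed
  qed
  from this[of UNIV] show ?thesis
    by simp
qed

lemma principal_pad_mult_vec:
  assumes "\<And>j. j \<notin> S \<Longrightarrow> z $ j = 0"
  shows "(principal_pad A S *v z) $ i = (if i \<in> S then (A *v z) $ i else z $ i)"
proof (cases "i \<in> S")
  case True
  have "(principal_pad A S *v z) $ i = (\<Sum>j\<in>UNIV. (if j \<in> S then A $ i $ j else 0) * z $ j)"
    using True by (auto simp: matrix_vector_mult_def principal_pad_def intro!: sum.cong)
  also have "\<dots> = (A *v z) $ i"
    unfolding matrix_vector_mult_def using assms by (auto intro!: sum.cong)
  finally show ?thesis
    using True by simp
next
  case False
  have "(principal_pad A S *v z) $ i = (\<Sum>j\<in>UNIV. (if i = j then 1 else 0) * z $ j)"
    using False by (simp add: matrix_vector_mult_def principal_pad_def)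
  also have "\<dots> = (\<Sum>j\<in>UNIV. if j = i then z $ i else 0)"
    by (rule sum.cong) auto
  finally show ?thesis
    using False by simp
qed

lemma principal_minor_nonzero_kernel:
  fixes A :: "real^'n^'n"
  assumes "principal_minor A S \<noteq> 0"
    and "\<And>j. j \<notin> S \<Longrightarrow> z $ j = 0" and "\<And>i. i \<in> S \<Longrightarrow> (A *v z) $ i = 0"
  shows "z = 0"
proof -
  have "principal_pad A S *v z = 0"
    using assms(2,3) by (simp add: vec_eq_iff principal_pad_mult_vec)
  moreover have "det (principal_pad A S) \<noteq> 0"
    using assms(1) by (simp add: det_principal_pad)
  ultimately show ?thesis
    by (metis invertible_det_nz invertible_def matrix_left_invertible_ker)
qed

lemma P_matrix_sign_nonreversing:
  fixes M :: "real^'n^'n"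
  assumes P: "P_matrix M"
  shows "sign_nonreversing M"
  unfolding sign_nonreversing_def
proof (intro allI impI)
  fix z :: "real^'n"
  assume "z \<noteq> 0"
  show "\<exists>i. 0 < z $ i * (M *v z) $ i"
  proof (rule ccontr)
    assume "\<not> ?thesis"
    then have reversed: "z $ i * (M *v z) $ i \<le> 0" for i
      by (simp add: not_less)
    define S where "S = {i. z $ i \<noteq> 0}"
    define d where "d i = (if z $ i = 0 then 0 else - (M *v z) $ i / z $ i)" for i
    have d_nonneg: "0 \<le> d i" for i
    proof (cases "z $ i = 0")
      case False
      then have "d i = - (z $ i * (M *v z) $ i) / (z $ i)\<^sup>2"
        by (simp add: d_def power2_eq_square)
      then show ?thesis
        using reversed[of i] by (simp add: divide_nonpos_nonneg)
    qed (simp add: d_def)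
    \<comment> \<open>The shift d makes z a kernel vector of the principal submatrix of M + diag d on supp z.\<close>
    have "S \<noteq> {}"
      using \<open>z \<noteq> 0\<close> by (auto simp: S_def vec_eq_iff)
    then have "0 < principal_minor M S"
      using P by (simp add: P_matrix_def)
    also have "\<dots> \<le> principal_minor (M + diag_mat d) S"
      using P d_nonneg by (intro principal_minor_add_diag_mono P_matrix_principal_minor_nonneg)
    finally have "z = 0"
      by (intro principal_minor_nonzero_kernel[of "M + diag_mat d" S])
        (auto simp: S_def d_def matrix_vector_mult_add_rdistrib)
    with \<open>z \<noteq> 0\<close> show False ..
  qed
qed

section \<open>Positive semidefinite matrices\<close>

lemma nonneg_orthant_eq_convex_cone_hull:
  "{w::real^'n. \<forall>i. 0 \<le> w $ i} = convex_cone hull (range (\<lambda>i. axis i (1::real)))"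
proof
  show "convex_cone hull (range (\<lambda>i. axis i (1::real))) \<subseteq> {w::real^'n. \<forall>i. 0 \<le> w $ i}"
    by (rule hull_minimal) (auto simp: convex_cone_iff axis_def)
next
  show "{w::real^'n. \<forall>i. 0 \<le> w $ i} \<subseteq> convex_cone hull (range (\<lambda>i. axis i (1::real)))"
  proof
    fix w :: "real^'n"
    assume w: "w \<in> {w. \<forall>i. 0 \<le> w $ i}"
    have partial_sums:
      "(\<Sum>i\<in>F. w $ i *\<^sub>R axis i (1::real)) \<in> convex_cone hull (range (\<lambda>i. axis i (1::real)))"
      if "finite F" for F
      using that
    proof (induction F rule: finite_induct)
      case (insert k F)
      have "w $ k *\<^sub>R axis k (1::real) \<in> convex_cone hull (range (\<lambda>i. axis i (1::real)))"
        using w by (intro convex_cone_hull_mul hull_inc) auto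
      from convex_cone_hull_add[OF this insert.IH] insert.hyps show ?case
        by simp
    qed (simp add: convex_cone_hull_contains_0)
    have expansion: "(\<Sum>i\<in>UNIV. w $ i *\<^sub>R axis i (1::real)) = w"
      using basis_expansion[of w] by (simp only: scalar_mult_eq_scaleR)
    show "w \<in> convex_cone hull (range (\<lambda>i. axis i (1::real)))"
      using partial_sums[of UNIV] by (simp add: expansion)
  qed
qed

lemma closed_matrix_image_nonneg_orthant:
  fixes A :: "real^'n^'m"
  shows "closed ((\<lambda>w. A *v w) ` {w. \<forall>i. 0 \<le> w $ i})"
  unfolding nonneg_orthant_eq_convex_cone_hull
    convex_cone_hull_linear_image[OF matrix_vector_mul_linear, symmetric]
  by (rule closed_convex_cone_hull) simp

lemma lcp_solvable_eq_complementary_cones: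
  "{q. lcp_sol M q \<noteq> {}} =
     (\<Union>S. (\<lambda>w. (diag_mat (\<lambda>i. of_bool (i \<notin> S)) - M ** diag_mat (\<lambda>i. of_bool (i \<in> S))) *v w)
            ` {w. \<forall>i. 0 \<le> w $ i})"
  (is "_ = (\<Union>S. ?C S)")
proof (intro set_eqI iffI)
  fix q
  assume "q \<in> {q. lcp_sol M q \<noteq> {}}"
  then obtain x where x: "x \<in> lcp_sol M q"
    by blast
  define y S where "y = M *v x + q" and "S = {i. x $ i \<noteq> 0}"
  have c: "0 \<le> x $ i" "0 \<le> y $ i" "x $ i * y $ i = 0" for i
    using x by (simp_all add: lcp_sol_iff_complementary y_def)
  \<comment> \<open>x and y have disjoint supports, so w = x + y encodes both.\<close>
  have "diag_mat (\<lambda>i. of_bool (i \<in> S)) *v (x + y) = x"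
    and "diag_mat (\<lambda>i. of_bool (i \<notin> S)) *v (x + y) = y"
    using c(3) by (auto simp: vec_eq_iff S_def)
  then have "(diag_mat (\<lambda>i. of_bool (i \<notin> S)) - M ** diag_mat (\<lambda>i. of_bool (i \<in> S))) *v (x + y) = q"
    by (simp add: matrix_vector_mult_diff_rdistrib flip: matrix_vector_mul_assoc) (simp add: y_def)
  moreover have "x + y \<in> {w. \<forall>i. 0 \<le> w $ i}"
    using c by simp
  ultimately show "q \<in> (\<Union>S. ?C S)"
    by blast
next
  fix q
  assume "q \<in> (\<Union>S. ?C S)"
  then obtain S w where w: "\<forall>i. 0 \<le> w $ i"
    and q: "q = (diag_mat (\<lambda>i. of_bool (i \<notin> S)) - M ** diag_mat (\<lambda>i. of_bool (i \<in> S))) *v w"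
    by blast
  define x where "x = diag_mat (\<lambda>i. of_bool (i \<in> S)) *v w"
  have "M *v x + q = diag_mat (\<lambda>i. of_bool (i \<notin> S)) *v w"
    by (simp add: q x_def matrix_vector_mult_diff_rdistrib matrix_vector_mul_assoc)
  then have "x \<in> lcp_sol M q"
    using w by (simp add: lcp_sol_iff_complementary x_def)
  then show "q \<in> {q. lcp_sol M q \<noteq> {}}"
    by blast
qed

lemma closed_lcp_solvable: "closed {q. lcp_sol M q \<noteq> {}}"
  unfolding lcp_solvable_eq_complementary_cones
  by (rule closed_UN) (simp_all add: closed_matrix_image_nonneg_orthant)

lemma mat_mult_vec:
  fixes x :: "real^'n"
  shows "mat e *v x = e *\<^sub>R x"
proof -
  have "mat e *v x = diag_mat (\<lambda>i. e) *v x"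
    by (simp add: mat_def diag_mat_def)
  also have "diag_mat (\<lambda>i. e) *v x = e *\<^sub>R x"
    by (simp add: vec_eq_iff)
  finally show ?thesis .
qed

lemma lcp_sol_add_mat_iff: "x \<in> lcp_sol (M + mat e) q \<longleftrightarrow> x \<in> lcp_sol M (q + e *\<^sub>R x)"
  by (simp add: lcp_sol_def matrix_vector_mult_add_rdistrib mat_mult_vec algebra_simps)

lemma positive_definite_sign_nonreversing:
  fixes A :: "real^'n^'n"
  assumes "\<And>z. z \<noteq> 0 \<Longrightarrow> 0 < z \<bullet> (A *v z)"
  shows "sign_nonreversing A"
  unfolding sign_nonreversing_def
proof (intro allI impI)
  fix z :: "real^'n"
  assume "z \<noteq> 0"
  then have pos: "0 < (\<Sum>i\<in>UNIV. z $ i * (A *v z) $ i)"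
    using assms by (simp add: inner_vec_def)
  show "\<exists>i. 0 < z $ i * (A *v z) $ i"
  proof (rule ccontr)
    assume "\<nexists>i. 0 < z $ i * (A *v z) $ i"
    then have "(\<Sum>i\<in>UNIV. z $ i * (A *v z) $ i) \<le> 0"
      by (intro sum_nonpos) (simp add: not_less)
    with pos show False
      by simp
  qed
qed

lemma psd_matrix_transpose: "psd_matrix (transpose M) \<longleftrightarrow> psd_matrix M"
proof -
  have "x \<bullet> (transpose M *v x) = x \<bullet> (M *v x)" for x
    by (metis dot_lmul_matrix inner_commute transpose_matrix_vector)
  then show ?thesis
    by (simp add: psd_matrix_def del: transpose_matrix_vector)
qed

lemma psd_add_mat_sign_nonreversing:
  fixes M :: "real^'n^'n"
  assumes "psd_matrix M" and "0 < e"
  shows "sign_nonreversing (M + mat e)"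
proof (rule positive_definite_sign_nonreversing)
  fix z :: "real^'n"
  assume "z \<noteq> 0"
  have "z \<bullet> ((M + mat e) *v z) = z \<bullet> (M *v z) + e * (z \<bullet> z)"
    by (simp add: matrix_vector_mult_add_rdistrib mat_mult_vec inner_add_right)
  then show "0 < z \<bullet> ((M + mat e) *v z)"
    using assms \<open>z \<noteq> 0\<close> by (simp add: psd_matrix_def add_nonneg_pos)
qed

lemma transpose_add_mat: "transpose (M + mat e) = transpose M + mat e"
  by (simp add: vec_eq_iff transpose_def mat_def)

lemma inner_nonneg_if_nonneg_components:
  fixes a b :: "real^'n"
  shows "(\<And>i. 0 \<le> a $ i) \<Longrightarrow> (\<And>i. 0 \<le> b $ i) \<Longrightarrow> 0 \<le> a \<bullet> b"
  unfolding inner_vec_def by (simp add: sum_nonneg)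

lemma psd_regularized_lcp_sol_bound:
  fixes M :: "real^'n^'n"
  assumes psd: "psd_matrix M" and e: "0 < e"
    and x: "x \<in> lcp_sol (M + mat e) q" and u: "u \<in> lcp_fea M q"
  shows "e * (norm (x - u))\<^sup>2 \<le> u \<bullet> (M *v u + q) + e * (norm u)\<^sup>2"
proof -
  define y v d where "y = M *v x + e *\<^sub>R x + q" and "v = M *v u + q" and "d = x - u"
  have x_nonneg: "\<And>i. 0 \<le> x $ i" and y_nonneg: "\<And>i. 0 \<le> y $ i" and "x \<bullet> y = 0"
    using x by (auto simp: lcp_sol_def matrix_vector_mult_add_rdistrib mat_mult_vec y_def add_ac)
  have u_nonneg: "\<And>i. 0 \<le> u $ i" and v_nonneg: "\<And>i. 0 \<le> v $ i"
    using u by (auto simp: lcp_fea_def v_def)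
  have "e * (d \<bullet> d) \<le> d \<bullet> (M *v d) + e * (d \<bullet> d)"
    using psd by (simp add: psd_matrix_def)
  also have "\<dots> = d \<bullet> (y - v - e *\<^sub>R u)"
    by (simp add: d_def y_def v_def matrix_vector_mult_diff_distrib inner_diff_right
        inner_add_right algebra_simps)
  also have "\<dots> = x \<bullet> y - x \<bullet> v - e * (x \<bullet> u) - u \<bullet> y + u \<bullet> v + e * (u \<bullet> u)"
    by (simp add: d_def inner_diff_left inner_diff_right inner_commute algebra_simps)
  also have "\<dots> \<le> u \<bullet> v + e * (u \<bullet> u)"
    using \<open>x \<bullet> y = 0\<close> e
      inner_nonneg_if_nonneg_components[OF x_nonneg v_nonneg]
      mult_nonneg_nonneg[OF _ inner_nonneg_if_nonneg_components[OF x_nonneg u_nonneg], of e]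
      inner_nonneg_if_nonneg_components[OF u_nonneg y_nonneg]
    by linarith
  finally show ?thesis
    by (simp add: d_def v_def power2_norm_eq_inner)
qed

lemma psd_regularized_lcp_sol_scaled_bound:
  fixes M :: "real^'n^'n"
  assumes psd: "psd_matrix M" and e: "0 < e" "e \<le> 1"
    and x: "x \<in> lcp_sol (M + mat e) q" and u: "u \<in> lcp_fea M q"
  shows "norm (e *\<^sub>R (x - u)) \<le> sqrt (e * (u \<bullet> (M *v u + q) + (norm u)\<^sup>2))"
proof (rule real_le_rsqrt)
  have "(norm (e *\<^sub>R (x - u)))\<^sup>2 = e * (e * (norm (x - u))\<^sup>2)"
    using e by (simp add: power2_eq_square)
  also have "\<dots> \<le> e * (u \<bullet> (M *v u + q) + e * (norm u)\<^sup>2)"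
    using psd_regularized_lcp_sol_bound[OF psd e(1) x u] e by (simp add: mult_left_mono)
  also have "\<dots> \<le> e * (u \<bullet> (M *v u + q) + (norm u)\<^sup>2)"
    using e by (intro mult_left_mono) (auto simp: mult_left_le_one_le)
  finally show "(norm (e *\<^sub>R (x - u)))\<^sup>2 \<le> e * (u \<bullet> (M *v u + q) + (norm u)\<^sup>2)" .
qed

lemma psd_add_mat_lcp_solvable:
  fixes M :: "real^'n^'n"
  assumes psd: "psd_matrix M" and e: "0 < e"
  shows "lcp_sol (M + mat e) q \<noteq> {}"
proof (rule sign_nonreversing_lcp_solvable)
  show "sign_nonreversing (M + mat e)"
    by (rule psd_add_mat_sign_nonreversing[OF psd e])
  show "sign_nonreversing (transpose (M + mat e))"
    unfolding transpose_add_mat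
    by (rule psd_add_mat_sign_nonreversing[OF _ e]) (simp add: psd_matrix_transpose psd)
qed

lemma psd_lcp_solvable:
  fixes M :: "real^'n^'n"
  assumes psd: "psd_matrix M" and u: "u \<in> lcp_fea M q"
  shows "lcp_sol M q \<noteq> {}"
proof -
  define \<epsilon> where "\<epsilon> k = inverse (real (Suc k))" for k
  have \<epsilon>: "0 < \<epsilon> k" "\<epsilon> k \<le> 1" for k
    by (simp_all add: \<epsilon>_def inverse_le_1_iff)
  have "\<forall>k. \<exists>x. x \<in> lcp_sol (M + mat (\<epsilon> k)) q"
    using psd_add_mat_lcp_solvable[OF psd \<epsilon>(1)] by blast
  then obtain x where x: "\<And>k. x k \<in> lcp_sol (M + mat (\<epsilon> k)) q"
    by metis
  \<comment> \<open>x k solves the LCP for M with the perturbed data q + eps k x k, which tends to q.\<close>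
  define K where "K = u \<bullet> (M *v u + q) + (norm u)\<^sup>2"
  have bound: "norm (\<epsilon> k *\<^sub>R (x k - u)) \<le> sqrt (\<epsilon> k * K)" for k
    unfolding K_def by (rule psd_regularized_lcp_sol_scaled_bound[OF psd \<epsilon> x u])
  have "(\<lambda>k. sqrt (\<epsilon> k * K)) \<longlonglongrightarrow> sqrt 0"
    unfolding \<epsilon>_def
    by (intro tendsto_real_sqrt tendsto_mult_left_zero[OF LIMSEQ_inverse_real_of_nat])
  then have "(\<lambda>k. \<epsilon> k *\<^sub>R (x k - u)) \<longlonglongrightarrow> 0"
    by (intro Lim_null_comparison[OF always_eventually[OF allI[OF bound]]]) simp
  moreover have "(\<lambda>k. \<epsilon> k *\<^sub>R u) \<longlonglongrightarrow> 0"
    using tendsto_scaleR[OF LIMSEQ_inverse_real_of_nat tendsto_const, of u] by (simp add: \<epsilon>_def)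
  ultimately have "(\<lambda>k. q + (\<epsilon> k *\<^sub>R (x k - u) + \<epsilon> k *\<^sub>R u)) \<longlonglongrightarrow> q + (0 + 0)"
    by (intro tendsto_add tendsto_const)
  then have "(\<lambda>k. q + \<epsilon> k *\<^sub>R x k) \<longlonglongrightarrow> q"
    by (simp add: scaleR_diff_right)
  moreover have "q + \<epsilon> k *\<^sub>R x k \<in> {q. lcp_sol M q \<noteq> {}}" for k
    using x[of k] lcp_sol_add_mat_iff by blast
  ultimately have "q \<in> {q. lcp_sol M q \<noteq> {}}"
    by (rule closed_sequentially[OF closed_lcp_solvable, rotated])
  then show ?thesis
    by simp
qed

theorem theorem3p2:
  fixes M :: "real^'n^'n" and q :: "real^'n" and r :: real
  assumes "r \<ge> 2"
  shows "(psd_matrix M \<and> lcp_fea M q \<noteq> {} \<longrightarrow>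
            lcp_sol M q = stat_set M q r \<and> lcp_sol M q \<noteq> {})
       \<and> (P_matrix M \<longrightarrow>
            (\<exists>xs. lcp_sol M q = {xs} \<and> stat_set M q r = {xs}))"
proof -
  have r: "1 < r"
    using assms by simp
  have psd_case: "lcp_sol M q = stat_set M q r \<and> lcp_sol M q \<noteq> {}"
    if "psd_matrix M" and "u \<in> lcp_fea M q" for u
    using lcp_sol_subset_stat_set[OF r] psd_stat_set_subset_lcp_sol[OF r that]
      psd_lcp_solvable[OF that] by blast
  have P_case: "\<exists>xs. lcp_sol M q = {xs} \<and> stat_set M q r = {xs}" if "P_matrix M"
  proof -
    have snr: "sign_nonreversing M" "sign_nonreversing (transpose M)"
      using that by (simp_all add: P_matrix_sign_nonreversing P_matrix_transpose)
    obtain xs where "xs \<in> lcp_sol M q"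
      using sign_nonreversing_lcp_solvable[OF snr] by blast
    then have "lcp_sol M q = {xs}"
      using sign_nonreversing_lcp_sol_unique[OF snr(1)] by blast
    moreover have "stat_set M q r = lcp_sol M q"
      using lcp_sol_subset_stat_set[OF r] sign_nonreversing_transpose_stat_set_subset_lcp_sol[OF r snr(2)]
      by blast
    ultimately show ?thesis
      by blast
  qed
  show ?thesis
    using psd_case P_case by blast
qed

end
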